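(* Let $A$ and $B$ be rings, $f: A\to B$ a ring homomorphism and $J$ a proper ideal of $B$ such that $f^{-1}(J)\subseteq\mathrm{nil}(A)$. If $f(A)+J$ is a weak Armendariz ring, then $A\bowtie^{f}J$ is a weak Armendariz ring.
   Context: All rings are associative with identity (not necessarily commutative), ring homomorphisms are unital, and ideals are two-sided. $\mathrm{nil}(R)$ denotes the set of nilpotent elements of a ring $R$. For a ring homomorphism $f:A\to B$ and an ideal $J$ of $B$, the amalgamation is the subring $A\bowtie^{f}J=\{(a,f(a)+j)\mid a\in A,\ j\in J\}$ of $A\times B$; $f(A)+J=\{f(a)+j: a\in A, j\in J\}$ is a subring of $B$. A ring $R$ is weak Armendariz if whenever $p(x)=\sum_{i=0}^n a_ix^i$ and $q(x)=\sum_{j=0}^m b_jx^j$ in $R[x]$ satisfy $p(x)q(x)=0$, then $a_ib_j\in\mathrm{nil}(R)$ for all $i,j$. *)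

theory Defs
  imports "HOL-Algebra.Chinese_Remainder" "HOL-Algebra.UnivPoly"
begin

definition nilpotents :: "('a, 'm) ring_scheme \<Rightarrow> 'a set" where
  "nilpotents R = {x \<in> carrier R. \<exists>n::nat. x [^]\<^bsub>R\<^esub> n = \<zero>\<^bsub>R\<^esub>}"

definition weak_armendariz :: "('a, 'm) ring_scheme \<Rightarrow> bool" where
  "weak_armendariz R \<longleftrightarrow>
     (\<forall>p \<in> carrier (UP R). \<forall>q \<in> carrier (UP R).
        p \<otimes>\<^bsub>UP R\<^esub> q = \<zero>\<^bsub>UP R\<^esub> \<longrightarrow>
        (\<forall>i j. coeff (UP R) p i \<otimes>\<^bsub>R\<^esub> coeff (UP R) q j \<in> nilpotents R))"

definition hom_plus_ideal ::
  "('a, 'm) ring_scheme \<Rightarrow> ('b, 'n) ring_scheme \<Rightarrow> ('a \<Rightarrow> 'b) \<Rightarrow> 'b set \<Rightarrow> ('b, 'n) ring_scheme" where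
  "hom_plus_ideal A B f J = B\<lparr>carrier := {f a \<oplus>\<^bsub>B\<^esub> j | a j. a \<in> carrier A \<and> j \<in> J}\<rparr>"

definition amalgamation ::
  "('a, 'm) ring_scheme \<Rightarrow> ('b, 'n) ring_scheme \<Rightarrow> ('a \<Rightarrow> 'b) \<Rightarrow> 'b set \<Rightarrow> ('a \<times> 'b) ring" where
  "amalgamation A B f J = (RDirProd A B)\<lparr>carrier := {(a, f a \<oplus>\<^bsub>B\<^esub> j) | a j. a \<in> carrier A \<and> j \<in> J}\<rparr>"

end

theory Submission
  imports Defs "HOL-Algebra.Subrings"
begin

text \<open>
  The second projection is a ring homomorphism from the amalgamation onto \<open>f(A) + J\<close>; applied
  coefficientwise it sends \<open>p q = 0\<close> to a vanishing product over \<open>f(A) + J\<close>, so every product of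
  coefficients \<open>(a, f a + u) (b, f b + v)\<close> has a nilpotent second component \<open>y\<close>. As
  \<open>f (a b) - y \<in> J\<close>, some power \<open>f ((a b)\<^sup>n)\<close> lies in \<open>J\<close>, so \<open>(a b)\<^sup>n\<close> and hence \<open>a b\<close> is
  nilpotent; a pair with both components nilpotent is nilpotent.
\<close>

lemma nat_pow_carrier_update:
  "x [^]\<^bsub>R\<lparr>carrier := X\<rparr>\<^esub> (n::nat) = x [^]\<^bsub>R\<^esub> n"
  by (simp add: nat_pow_def)

lemma nilpotents_carrier_update:
  assumes "X \<subseteq> carrier R"
  shows "nilpotents (R\<lparr>carrier := X\<rparr>) = X \<inter> nilpotents R"
  using assms by (auto simp: nilpotents_def nat_pow_carrier_update)

lemma (in ring) nat_pow_add_eq_zero: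
  assumes "x \<in> carrier R" "x [^] (n::nat) = \<zero>"
  shows "x [^] (n + m) = \<zero>"
  using assms by (simp add: nat_pow_mult[symmetric])

lemma (in ring) nilpotent_of_nat_pow_nilpotent:
  assumes "x \<in> carrier R" "x [^] (n::nat) \<in> nilpotents R"
  shows "x \<in> nilpotents R"
proof -
  obtain m :: nat where "(x [^] n) [^] m = \<zero>"
    using assms(2) by (auto simp: nilpotents_def)
  then show ?thesis
    using assms(1) by (auto simp: nilpotents_def nat_pow_pow)
qed

lemma RDirProd_simps:
  "(a, b) \<otimes>\<^bsub>RDirProd A B\<^esub> (c, d) = (a \<otimes>\<^bsub>A\<^esub> c, b \<otimes>\<^bsub>B\<^esub> d)"
  "(a, b) \<oplus>\<^bsub>RDirProd A B\<^esub> (c, d) = (a \<oplus>\<^bsub>A\<^esub> c, b \<oplus>\<^bsub>B\<^esub> d)"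
  "\<one>\<^bsub>RDirProd A B\<^esub> = (\<one>\<^bsub>A\<^esub>, \<one>\<^bsub>B\<^esub>)"
  "\<zero>\<^bsub>RDirProd A B\<^esub> = (\<zero>\<^bsub>A\<^esub>, \<zero>\<^bsub>B\<^esub>)"
  by (simp_all add: RDirProd_def DirProd_def monoid.defs)

lemma nat_pow_RDirProd:
  "(a, b) [^]\<^bsub>RDirProd A B\<^esub> (n::nat) = (a [^]\<^bsub>A\<^esub> n, b [^]\<^bsub>B\<^esub> n)"
  by (induct n) (simp_all add: RDirProd_simps)

lemma nilpotents_RDirProd:
  assumes "ring A" "ring B"
  shows "nilpotents (RDirProd A B) = nilpotents A \<times> nilpotents B"
proof (intro equalityI subsetI; clarify)
  fix a b assume "(a, b) \<in> nilpotents (RDirProd A B)"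
  then show "a \<in> nilpotents A \<and> b \<in> nilpotents B"
    by (auto simp: nilpotents_def RDirProd_carrier nat_pow_RDirProd RDirProd_simps)
next
  fix a b assume "a \<in> nilpotents A" "b \<in> nilpotents B"
  then obtain m n :: nat where ab: "a \<in> carrier A" "b \<in> carrier B"
    "a [^]\<^bsub>A\<^esub> m = \<zero>\<^bsub>A\<^esub>" "b [^]\<^bsub>B\<^esub> n = \<zero>\<^bsub>B\<^esub>"
    unfolding nilpotents_def by blast
  then have "a [^]\<^bsub>A\<^esub> (m + n) = \<zero>\<^bsub>A\<^esub>" "b [^]\<^bsub>B\<^esub> (m + n) = \<zero>\<^bsub>B\<^esub>"
    using ring.nat_pow_add_eq_zero[OF assms(1)] ring.nat_pow_add_eq_zero[OF assms(2), of b n m]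
    by (auto simp: add.commute)
  then show "(a, b) \<in> nilpotents (RDirProd A B)"
    using ab by (auto simp: nilpotents_def RDirProd_carrier nat_pow_RDirProd RDirProd_simps)
qed

lemma (in ring) nat_pow_diff_in_ideal:
  assumes "ideal J R" "x \<in> carrier R" "y \<in> carrier R" "x \<ominus> y \<in> J"
  shows "x [^] (n::nat) \<ominus> y [^] n \<in> J"
proof -
  interpret J: ideal J R by fact
  show ?thesis
  proof (induct n)
    case 0
    show ?case by (simp add: r_neg minus_eq)
  next
    case (Suc n)
    have "x [^] Suc n \<ominus> y [^] Suc n = (x [^] n \<ominus> y [^] n) \<otimes> x \<oplus> y [^] n \<otimes> (x \<ominus> y)"
      using assms by (simp add: minus_eq l_distr r_distr a_ac l_minus r_minus r_neg2)
    also have "\<dots> \<in> J"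
      using Suc assms by (simp add: J.I_l_closed J.I_r_closed)
    finally show ?case .
  qed
qed

lemma (in ring) nat_pow_in_ideal_if_nilpotent_add:
  assumes "ideal J R" "x \<in> carrier R" "w \<in> J" "x \<oplus> w \<in> nilpotents R"
  shows "\<exists>n::nat. x [^] n \<in> J"
proof -
  interpret J: ideal J R by fact
  have w: "w \<in> carrier R" using assms(3) by auto
  obtain n :: nat where n: "(x \<oplus> w) [^] n = \<zero>"
    using assms(4) by (auto simp: nilpotents_def)
  have "x \<ominus> (x \<oplus> w) = \<ominus> w"
    using assms(2) w by (simp add: minus_eq minus_add a_assoc[symmetric] r_neg)
  then have "x \<ominus> (x \<oplus> w) \<in> J"
    using assms(3) by (simp add: J.a_inv_closed)
  then have "x [^] n \<ominus> (x \<oplus> w) [^] n \<in> J"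
    using assms(1,2) w by (intro nat_pow_diff_in_ideal) auto
  then show ?thesis
    using n assms(2) by (auto simp: minus_eq)
qed

lemma RDirProd_a_inv:
  assumes "ring A" "ring B" "a \<in> carrier A" "b \<in> carrier B"
  shows "\<ominus>\<^bsub>RDirProd A B\<^esub> (a, b) = (\<ominus>\<^bsub>A\<^esub> a, \<ominus>\<^bsub>B\<^esub> b)"
proof -
  interpret P: ring "RDirProd A B" using RDirProd_ring assms by blast
  interpret A: ring A by fact
  interpret B: ring B by fact
  show ?thesis
    by (rule P.minus_equality) (auto simp: RDirProd_simps RDirProd_carrier assms A.l_neg B.l_neg)
qed

context ring_hom_ring
begin

lemma hom_plus_ideal_add:
  assumes "a \<in> carrier R" "b \<in> carrier R" "u \<in> carrier S" "v \<in> carrier S"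
  shows "(h a \<oplus>\<^bsub>S\<^esub> u) \<oplus>\<^bsub>S\<^esub> (h b \<oplus>\<^bsub>S\<^esub> v) = h (a \<oplus> b) \<oplus>\<^bsub>S\<^esub> (u \<oplus>\<^bsub>S\<^esub> v)"
  using assms by (simp add: S.a_ac)

lemma hom_plus_ideal_a_inv:
  assumes "a \<in> carrier R" "u \<in> carrier S"
  shows "\<ominus>\<^bsub>S\<^esub> (h a \<oplus>\<^bsub>S\<^esub> u) = h (\<ominus> a) \<oplus>\<^bsub>S\<^esub> \<ominus>\<^bsub>S\<^esub> u"
  using assms by (simp add: S.minus_add)

lemma hom_plus_ideal_mult:
  assumes "ideal J S" "a \<in> carrier R" "b \<in> carrier R" "u \<in> J" "v \<in> J"
  shows "\<exists>w\<in>J. (h a \<oplus>\<^bsub>S\<^esub> u) \<otimes>\<^bsub>S\<^esub> (h b \<oplus>\<^bsub>S\<^esub> v) = h (a \<otimes> b) \<oplus>\<^bsub>S\<^esub> w"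
proof
  interpret J: ideal J S by fact
  have uv: "u \<in> carrier S" "v \<in> carrier S" using assms by auto
  let ?w = "h a \<otimes>\<^bsub>S\<^esub> v \<oplus>\<^bsub>S\<^esub> u \<otimes>\<^bsub>S\<^esub> h b \<oplus>\<^bsub>S\<^esub> u \<otimes>\<^bsub>S\<^esub> v"
  show "?w \<in> J"
    using assms uv by (simp add: J.I_l_closed J.I_r_closed)
  show "(h a \<oplus>\<^bsub>S\<^esub> u) \<otimes>\<^bsub>S\<^esub> (h b \<oplus>\<^bsub>S\<^esub> v) = h (a \<otimes> b) \<oplus>\<^bsub>S\<^esub> ?w"
    using assms uv by (simp add: S.l_distr S.r_distr S.a_ac)
qed

lemma subring_hom_plus_ideal:
  assumes "ideal J S"
  shows "subring {h a \<oplus>\<^bsub>S\<^esub> j | a j. a \<in> carrier R \<and> j \<in> J} S"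
proof -
  interpret J: ideal J S by fact
  show ?thesis
  proof (rule S.subringI)
    have "\<one>\<^bsub>S\<^esub> = h \<one> \<oplus>\<^bsub>S\<^esub> \<zero>\<^bsub>S\<^esub>" by simp
    then show "\<one>\<^bsub>S\<^esub> \<in> {h a \<oplus>\<^bsub>S\<^esub> j | a j. a \<in> carrier R \<and> j \<in> J}"
      using J.zero_closed R.one_closed by blast
  next
    fix x assume "x \<in> {h a \<oplus>\<^bsub>S\<^esub> j | a j. a \<in> carrier R \<and> j \<in> J}"
    then obtain a u where x: "x = h a \<oplus>\<^bsub>S\<^esub> u" "a \<in> carrier R" "u \<in> J" by blast
    then have "\<ominus>\<^bsub>S\<^esub> x = h (\<ominus> a) \<oplus>\<^bsub>S\<^esub> \<ominus>\<^bsub>S\<^esub> u"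
      using hom_plus_ideal_a_inv by auto
    then show "\<ominus>\<^bsub>S\<^esub> x \<in> {h a \<oplus>\<^bsub>S\<^esub> j | a j. a \<in> carrier R \<and> j \<in> J}"
      using x(2,3) R.a_inv_closed J.a_inv_closed by blast
  next
    fix x y assume "x \<in> {h a \<oplus>\<^bsub>S\<^esub> j | a j. a \<in> carrier R \<and> j \<in> J}"
      "y \<in> {h a \<oplus>\<^bsub>S\<^esub> j | a j. a \<in> carrier R \<and> j \<in> J}"
    then obtain a u b v where xy: "x = h a \<oplus>\<^bsub>S\<^esub> u" "y = h b \<oplus>\<^bsub>S\<^esub> v"
      "a \<in> carrier R" "u \<in> J" "b \<in> carrier R" "v \<in> J" by blast
    obtain w where "w \<in> J" "x \<otimes>\<^bsub>S\<^esub> y = h (a \<otimes> b) \<oplus>\<^bsub>S\<^esub> w"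
      using hom_plus_ideal_mult[OF assms xy(3,5,4,6)] xy(1,2) by blast
    then show "x \<otimes>\<^bsub>S\<^esub> y \<in> {h a \<oplus>\<^bsub>S\<^esub> j | a j. a \<in> carrier R \<and> j \<in> J}"
      using xy(3,5) by blast
    have "x \<oplus>\<^bsub>S\<^esub> y = h (a \<oplus> b) \<oplus>\<^bsub>S\<^esub> (u \<oplus>\<^bsub>S\<^esub> v)"
      using hom_plus_ideal_add xy by auto
    then show "x \<oplus>\<^bsub>S\<^esub> y \<in> {h a \<oplus>\<^bsub>S\<^esub> j | a j. a \<in> carrier R \<and> j \<in> J}"
      using xy(3-6) J.a_closed by blast
  qed auto
qed

lemma subring_amalgamation:
  assumes "ideal J S"
  shows "subring {(a, h a \<oplus>\<^bsub>S\<^esub> j) | a j. a \<in> carrier R \<and> j \<in> J} (RDirProd R S)"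
proof -
  interpret J: ideal J S by fact
  interpret P: ring "RDirProd R S" using RDirProd_ring R.ring_axioms S.ring_axioms by blast
  show ?thesis
  proof (rule P.subringI)
    have "\<one>\<^bsub>RDirProd R S\<^esub> = (\<one>, h \<one> \<oplus>\<^bsub>S\<^esub> \<zero>\<^bsub>S\<^esub>)"
      by (simp add: RDirProd_simps)
    then show "\<one>\<^bsub>RDirProd R S\<^esub> \<in> {(a, h a \<oplus>\<^bsub>S\<^esub> j) | a j. a \<in> carrier R \<and> j \<in> J}"
      using J.zero_closed R.one_closed by blast
  next
    fix x assume "x \<in> {(a, h a \<oplus>\<^bsub>S\<^esub> j) | a j. a \<in> carrier R \<and> j \<in> J}"
    then show "\<ominus>\<^bsub>RDirProd R S\<^esub> x \<in> {(a, h a \<oplus>\<^bsub>S\<^esub> j) | a j. a \<in> carrier R \<and> j \<in> J}"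
      using hom_plus_ideal_a_inv J.a_inv_closed
      by (fastforce simp: RDirProd_a_inv R.ring_axioms S.ring_axioms)
  next
    fix x y assume "x \<in> {(a, h a \<oplus>\<^bsub>S\<^esub> j) | a j. a \<in> carrier R \<and> j \<in> J}"
      "y \<in> {(a, h a \<oplus>\<^bsub>S\<^esub> j) | a j. a \<in> carrier R \<and> j \<in> J}"
    then obtain a u b v where xy: "x = (a, h a \<oplus>\<^bsub>S\<^esub> u)" "y = (b, h b \<oplus>\<^bsub>S\<^esub> v)"
      "a \<in> carrier R" "u \<in> J" "b \<in> carrier R" "v \<in> J" by blast
    show "x \<otimes>\<^bsub>RDirProd R S\<^esub> y \<in> {(a, h a \<oplus>\<^bsub>S\<^esub> j) | a j. a \<in> carrier R \<and> j \<in> J}"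
      using hom_plus_ideal_mult[OF assms xy(3,5,4,6)] xy(1,2,3,5) by (force simp: RDirProd_simps)
    show "x \<oplus>\<^bsub>RDirProd R S\<^esub> y \<in> {(a, h a \<oplus>\<^bsub>S\<^esub> j) | a j. a \<in> carrier R \<and> j \<in> J}"
      using hom_plus_ideal_add[of a b u v] xy J.a_closed by (force simp: RDirProd_simps)
  qed (auto simp: RDirProd_carrier)
qed

lemma ring_hom_plus_ideal: "ideal J S \<Longrightarrow> ring (hom_plus_ideal R S h J)"
  unfolding hom_plus_ideal_def by (rule S.subring_is_ring[OF subring_hom_plus_ideal])

lemma ring_amalgamation: "ideal J S \<Longrightarrow> ring (amalgamation R S h J)"
  unfolding amalgamation_def
  by (rule ring.subring_is_ring[OF RDirProd_ring[OF R.ring_axioms S.ring_axioms] subring_amalgamation])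

lemma snd_ring_hom_amalgamation:
  "snd \<in> ring_hom (amalgamation R S h J) (hom_plus_ideal R S h J)"
  by (rule ring_hom_memI)
    (force simp: amalgamation_def hom_plus_ideal_def RDirProd_simps split: prod.splits)+

lemma nilpotent_amalgamation_if_snd_nilpotent:
  assumes "ideal J S" "{a \<in> carrier R. h a \<in> J} \<subseteq> nilpotents R"
    and "x \<in> carrier (amalgamation R S h J)" "snd x \<in> nilpotents S"
  shows "x \<in> nilpotents (amalgamation R S h J)"
proof -
  obtain a u where x: "x = (a, h a \<oplus>\<^bsub>S\<^esub> u)" "a \<in> carrier R" "u \<in> J"
    using assms(3) by (auto simp: amalgamation_def)
  obtain n :: nat where "h a [^]\<^bsub>S\<^esub> n \<in> J"
    using S.nat_pow_in_ideal_if_nilpotent_add[OF assms(1) hom_closed[OF x(2)] x(3)] x(1) assms(4)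
    by auto
  then have "a [^] n \<in> nilpotents R"
    using assms(2) x(2) by (auto simp: hom_nat_pow)
  then have "a \<in> nilpotents R"
    using R.nilpotent_of_nat_pow_nilpotent x(2) by blast
  then have "x \<in> nilpotents (RDirProd R S)"
    using assms(4) x(1) by (simp add: nilpotents_RDirProd R.ring_axioms S.ring_axioms)
  moreover have "carrier (amalgamation R S h J) \<subseteq> carrier (RDirProd R S)"
    using subringE(1)[OF subring_amalgamation[OF assms(1)]] by (simp add: amalgamation_def)
  ultimately show ?thesis
    using assms(3) unfolding amalgamation_def by (simp add: nilpotents_carrier_update)
qed

lemma UP_comp_closed:
  assumes "p \<in> carrier (UP R)"
  shows "h \<circ> p \<in> carrier (UP S)"
proof -
  obtain n where p: "p \<in> up R" "bound \<zero> n p"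
    using assms by (auto simp: UP_def)
  then have "h \<circ> p \<in> up S"
    using mem_upD[OF p(1)] by (intro mem_upI) (force simp: bound_def hom_zero)+
  then show ?thesis
    by (simp add: UP_def)
qed

lemma UP_comp_mult:
  assumes "p \<in> carrier (UP R)" "q \<in> carrier (UP R)"
  shows "h \<circ> (p \<otimes>\<^bsub>UP R\<^esub> q) = (h \<circ> p) \<otimes>\<^bsub>UP S\<^esub> (h \<circ> q)"
proof -
  have "\<And>i. p i \<in> carrier R" "\<And>i. q i \<in> carrier R"
    using assms by (auto simp: UP_def)
  moreover have "h \<circ> p \<in> up S" "h \<circ> q \<in> up S"
    using UP_comp_closed assms by (auto simp: UP_def)
  ultimately show ?thesis
    using assms by (auto simp: UP_def fun_eq_iff Pi_def comp_def)
qed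

lemma weak_armendariz_if_reflects_nilpotents:
  assumes "weak_armendariz S"
    and "\<And>x. x \<in> carrier R \<Longrightarrow> h x \<in> nilpotents S \<Longrightarrow> x \<in> nilpotents R"
  shows "weak_armendariz R"
  unfolding weak_armendariz_def
proof (intro ballI impI allI)
  fix p q i j
  assume p: "p \<in> carrier (UP R)" and q: "q \<in> carrier (UP R)"
    and pq: "p \<otimes>\<^bsub>UP R\<^esub> q = \<zero>\<^bsub>UP R\<^esub>"
  have "(h \<circ> p) \<otimes>\<^bsub>UP S\<^esub> (h \<circ> q) = \<zero>\<^bsub>UP S\<^esub>"
    using UP_comp_mult[OF p q] pq by (simp add: UP_def comp_def)
  then have "coeff (UP S) (h \<circ> p) i \<otimes>\<^bsub>S\<^esub> coeff (UP S) (h \<circ> q) j \<in> nilpotents S"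
    using assms(1) UP_comp_closed p q unfolding weak_armendariz_def by blast
  moreover have "coeff (UP S) (h \<circ> p) i = h (p i)" "coeff (UP S) (h \<circ> q) j = h (q j)"
    using UP_comp_closed p q by (simp_all add: UP_def)
  moreover have "p i \<in> carrier R" "q j \<in> carrier R"
    using p q by (auto simp: UP_def)
  ultimately show "coeff (UP R) p i \<otimes> coeff (UP R) q j \<in> nilpotents R"
    using assms(2) p q by (simp add: UP_def)
qed

end

theorem theorem4p1:
  fixes A :: "('a, 'm) ring_scheme" and B :: "('b, 'n) ring_scheme"
    and f :: "'a \<Rightarrow> 'b" and J :: "'b set"
  assumes "ring A" and "ring B"
    and "f \<in> ring_hom A B"
    and "ideal J B" and "J \<noteq> carrier B"
    and "{a \<in> carrier A. f a \<in> J} \<subseteq> nilpotents A"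
    and "weak_armendariz (hom_plus_ideal A B f J)"
  shows "weak_armendariz (amalgamation A B f J)"
proof -
  interpret f: ring_hom_ring A B f
    using assms(1-3) by (rule ring_hom_ringI2)
  interpret snd: ring_hom_ring "amalgamation A B f J" "hom_plus_ideal A B f J" snd
    using f.ring_amalgamation f.ring_hom_plus_ideal f.snd_ring_hom_amalgamation assms(4)
    by (blast intro: ring_hom_ringI2)
  have "nilpotents (hom_plus_ideal A B f J) \<subseteq> nilpotents B"
    using subringE(1)[OF f.subring_hom_plus_ideal[OF assms(4)]]
    by (auto simp: hom_plus_ideal_def nilpotents_carrier_update)
  then show ?thesis
    using snd.weak_armendariz_if_reflects_nilpotents assms(7)
      f.nilpotent_amalgamation_if_snd_nilpotent[OF assms(4,6)] by blast
qed

end
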